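(* Let $\mathcal D$, $f(\cdot;\xi)$, $F$ and the DiSK iteration (with SGD base update) be as described in the context, suppose Assumptions (A1)–(A3) hold, and choose $C\ge\left(1+\frac{2(1-\kappa)}{\kappa}\right)G$. Define $\Delta_t=\nabla F(x_t)-\tilde g_t$ and $M_\gamma=1+\frac{4(2+1/\kappa+|1+\gamma|)}{\gamma^2}$. Then for every $t\ge1$, $$\mathbb E_t\|\Delta_t\|^2\le(1-\kappa)^2\left(1+4\eta^2L^2+|1+\gamma|\left(\kappa+2\eta^2L^2M_\gamma\right)\right)\|\Delta_{t-1}\|^2+2\eta^2L^2(1-\kappa)^2\left(2+|1+\gamma|M_\gamma\right)\|\nabla F(x_{t-1})\|^2+\kappa^2\left((2+|1+\gamma|)\frac{\sigma_{\mathrm{SGD}}^2}{B}+d\sigma_{\mathrm{DP}}^2\right),$$ where $\mathbb E_t$ denotes expectation conditioned on all information before iteration $t$ (i.e. on $x_0,\dots,x_t$ and $\tilde g_0,\dots,\tilde g_{t-1}$).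
   Context: Let $\mathcal D=\{\xi_1,\dots,\xi_N\}$ be a finite dataset, $f(\cdot;\xi):\mathbb R^d\to\mathbb R$ differentiable loss functions, $F(x)=\frac1N\sum_{\xi\in\mathcal D}f(x;\xi)$. For $v\in\mathbb R^d$, $\mathrm{clip}(v,C)=\min\{1,C/\|v\|\}\,v$. DiSK iteration with SGD base update, parameters $x_0\in\mathbb R^d$, step size $\eta>0$, $\gamma\neq0$, $\kappa\in(0,1]$, clipping threshold $C>0$, noise level $\sigma_{\mathrm{DP}}\ge0$, batch size $B\ge1$: initialize $\tilde g_{-1}=0$, $d_{-1}=0$; for $t=0,1,\dots$: draw a minibatch $\mathcal B_t$ of $B$ samples uniformly at random from $\mathcal D$ (independently of the past), set $a=\frac{1-\kappa}{\kappa\gamma}$ and $g_t=\frac1B\sum_{\xi\in\mathcal B_t}\mathrm{clip}\big(a\nabla f(x_t+\gamma d_{t-1};\xi)+(1-a)\nabla f(x_t;\xi),C\big)+w_t$ with $w_t\sim\mathcal N(0,\sigma_{\mathrm{DP}}^2I_d)$ independent of everything else; $\tilde g_t=(1-\kappa)\tilde g_{t-1}+\kappa g_t$; $x_{t+1}=x_t-\eta\tilde g_t$; $d_t=x_{t+1}-x_t$. Assumptions: (A1) each $f(\cdot;\xi)$ is $L$-smooth: $\|\nabla f(x;\xi)-\nabla f(y;\xi)\|\le L\|x-y\|$ for all $x,y,\xi$; (A2) $\frac1N\sum_{\xi\in\mathcal D}\|\nabla f(x;\xi)-\nabla F(x)\|^2\le\sigma_{\mathrm{SGD}}^2$ for all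 $x$; (A3) $\|\nabla f(x;\xi)\|\le G$ for all $x,\xi$. *)

theory Defs
  imports "HOL-Analysis.Analysis" "HOL-Probability.Probability"
begin

text \<open>Clipping: clip(v,C) = min{1, C/||v||} v  (for v = 0 this is 0 in Isabelle, as intended).\<close>
definition clip :: "real ^ 'd \<Rightarrow> real \<Rightarrow> real ^ 'd" where
  "clip v C = min 1 (C / norm v) *\<^sub>R v"

text \<open>Uniform minibatch: B indices drawn independently and uniformly from the data indices {0..<N}
  (a list of length B; sums over the minibatch are sums over this list).\<close>
definition batch_pmf :: "nat \<Rightarrow> nat \<Rightarrow> nat list pmf" where
  "batch_pmf N B = pmf_of_set {bs. set bs \<subseteq> {..<N} \<and> length bs = B}"

definition gauss_noise :: "real \<Rightarrow> (real ^ 'd) measure" where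
  "gauss_noise \<sigma> = distr (Pi\<^sub>M UNIV (\<lambda>i::'d. density lborel std_normal_density)) borel
                        (\<lambda>z. \<sigma> *\<^sub>R (\<chi> i. z i))"

text \<open>One DiSK step. State = (x_t, gtilde_{t-1}, d_{t-1}); input = (minibatch, noise w_t);
  gf i x is the gradient of f(.;xi_i) at x. Result = (x_{t+1}, gtilde_t, d_t).\<close>
definition disk_step ::
  "(nat \<Rightarrow> real ^ 'd \<Rightarrow> real ^ 'd) \<Rightarrow> real \<Rightarrow> real \<Rightarrow> real \<Rightarrow> real \<Rightarrow> nat \<Rightarrow>
   ((real ^ 'd) \<times> (real ^ 'd) \<times> (real ^ 'd)) \<Rightarrow> nat list \<Rightarrow> real ^ 'd \<Rightarrow>
   ((real ^ 'd) \<times> (real ^ 'd) \<times> (real ^ 'd))" where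
  "disk_step gf \<eta> \<gamma> \<kappa> C B s bt w =
     (let x = fst s; gt = fst (snd s); d = snd (snd s);
          a = (1 - \<kappa>) / (\<kappa> * \<gamma>);
          g = (1 / real B) *\<^sub>R (\<Sum>i\<leftarrow>bt. clip (a *\<^sub>R gf i (x + \<gamma> *\<^sub>R d) + (1 - a) *\<^sub>R gf i x) C) + w;
          gt' = (1 - \<kappa>) *\<^sub>R gt + \<kappa> *\<^sub>R g;
          x' = x - \<eta> *\<^sub>R gt'
      in (x', gt', x' - x))"

text \<open>The DiSK trajectory for a realisation (bs t = minibatch B_t, ws t = noise w_t):
  disk_state ... t = (x_t, gtilde_{t-1}, d_{t-1}), with gtilde_{-1} = d_{-1} = 0.\<close>
fun disk_state ::
  "(nat \<Rightarrow> real ^ 'd \<Rightarrow> real ^ 'd) \<Rightarrow> real ^ 'd \<Rightarrow> real \<Rightarrow> real \<Rightarrow> real \<Rightarrow> real \<Rightarrow> nat \<Rightarrow>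
   (nat \<Rightarrow> nat list) \<Rightarrow> (nat \<Rightarrow> real ^ 'd) \<Rightarrow> nat \<Rightarrow> ((real ^ 'd) \<times> (real ^ 'd) \<times> (real ^ 'd))" where
  "disk_state gf x0 \<eta> \<gamma> \<kappa> C B bs ws 0 = (x0, 0, 0)"
| "disk_state gf x0 \<eta> \<gamma> \<kappa> C B bs ws (Suc t) =
     disk_step gf \<eta> \<gamma> \<kappa> C B (disk_state gf x0 \<eta> \<gamma> \<kappa> C B bs ws t) (bs t) (ws t)"

end

theory Submission
  imports Defs
begin

(* Conditionally on the past, the new tracking error Delta_t is its conditional mean
   grad F(x_t) - (1 - kappa) gtilde_{t-1} - kappa ubar, with ubar the dataset average of the clipped
   per-sample DiSK directions, plus two independent centred fluctuations: the Gaussian noise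
   contributes kappa^2 d sigma_DP^2, and uniform minibatch sampling with replacement contributes
   kappa^2 / B times the empirical variance of the clipped directions.  Clipping is the projection
   onto a ball, hence 1-Lipschitz, so that variance is at most 2 sigma_SGD^2 plus a term of order
   (L eta ||gtilde_{t-1}||)^2.  For the mean, the choice a = (1 - kappa) / (kappa gamma) makes
   (1 - kappa) grad f(x_{t-1}) + kappa (unclipped direction) equal to grad f(x_t) whenever grad f
   is affine, so by L-smoothness the per-sample bias is O(L eta ||gtilde_{t-1}||); the threshold
   C >= (1 + 2 (1 - kappa) / kappa) G keeps the extra error due to clipping of the same order.
   Finally ||gtilde_{t-1}|| <= ||Delta_{t-1}|| + ||grad F(x_{t-1})|| and Young's inequality give
   the recursion. *)

lemma power2_norm_add:
  fixes x y :: "'a::real_inner"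
  shows "(norm (x + y))\<^sup>2 = (norm x)\<^sup>2 + 2 * inner x y + (norm y)\<^sup>2"
  by (simp add: power2_norm_eq_inner inner_add_left inner_add_right inner_commute)

lemma power2_norm_diff:
  fixes x y :: "'a::real_inner"
  shows "(norm (x - y))\<^sup>2 = (norm x)\<^sup>2 - 2 * inner x y + (norm y)\<^sup>2"
  by (simp add: power2_norm_eq_inner inner_diff_left inner_diff_right inner_commute)

lemma power2_norm_add_le: "(norm (a + b))\<^sup>2 \<le> 2 * (norm a)\<^sup>2 + 2 * (norm b)\<^sup>2"
proof -
  have "(norm (a + b))\<^sup>2 \<le> (norm a + norm b)\<^sup>2"
    by (intro power_mono norm_triangle_ineq) simp
  also have "\<dots> \<le> 2 * (norm a)\<^sup>2 + 2 * (norm b)\<^sup>2"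
    using sum_squares_bound[of "norm a" "norm b"] by (simp add: power2_sum)
  finally show ?thesis .
qed

lemma norm_triangle_3: "norm (a + b + c) \<le> norm a + norm b + norm c"
  using norm_triangle_ineq[of "a + b" c] norm_triangle_ineq[of a b] by linarith

lemma power2_norm_vec: "(norm (v :: real ^ 'd))\<^sup>2 = (\<Sum>i\<in>UNIV. (v $ i)\<^sup>2)"
  unfolding power2_norm_eq_inner by (simp add: inner_vec_def power2_eq_square)

section \<open>Gaussian noise\<close>

lemma nn_integral_std_normal_affine_sq:
  fixes a b :: real
  shows "(\<integral>\<^sup>+u. ennreal ((a - b * u)\<^sup>2) \<partial>density lborel std_normal_density) = ennreal (a\<^sup>2 + b\<^sup>2)"
proof -
  have m0: "has_bochner_integral lborel (\<lambda>u. std_normal_density u * u ^ (2 * 0)) 1"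
    using std_normal_moment_even[of 0] by simp
  have m1: "has_bochner_integral lborel (\<lambda>u. std_normal_density u * u ^ (2 * 0 + 1)) 0"
    using std_normal_moment_odd[of 0] by simp
  have m2: "has_bochner_integral lborel (\<lambda>u. std_normal_density u * u ^ (2 * 1)) 1"
    using std_normal_moment_even[of 1] by simp
  have "has_bochner_integral lborel (\<lambda>u. a\<^sup>2 * (std_normal_density u * u ^ (2 * 0))
      - 2 * a * b * (std_normal_density u * u ^ (2 * 0 + 1)) + b\<^sup>2 * (std_normal_density u * u ^ (2 * 1)))
      (a\<^sup>2 * 1 - 2 * a * b * 0 + b\<^sup>2 * 1)"
    by (intro has_bochner_integral_add has_bochner_integral_diff has_bochner_integral_mult_right
        m0 m1 m2)
  then have "has_bochner_integral lborel (\<lambda>u. std_normal_density u *\<^sub>R (a - b * u)\<^sup>2) (a\<^sup>2 + b\<^sup>2)"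
    by (rule has_bochner_integral_cong[THEN iffD1, rotated 3]) (auto simp: power2_eq_square algebra_simps)
  then have "has_bochner_integral (density lborel std_normal_density) (\<lambda>u. (a - b * u)\<^sup>2) (a\<^sup>2 + b\<^sup>2)"
    by (rule has_bochner_integral_density[rotated 3]) (auto simp: normal_density_nonneg)
  then show ?thesis
    by (subst nn_integral_eq_integral) (auto simp: has_bochner_integral_iff)
qed

lemma nn_integral_gauss_noise_sq:
  fixes m :: "real ^ 'd"
  shows "(\<integral>\<^sup>+w. ennreal ((norm (m - c *\<^sub>R w))\<^sup>2) \<partial>gauss_noise \<sigma>)
       = ennreal ((norm m)\<^sup>2 + c\<^sup>2 * real CARD('d) * \<sigma>\<^sup>2)"
proof -
  let ?N = "density lborel std_normal_density"
  let ?P = "Pi\<^sub>M (UNIV :: 'd set) (\<lambda>i. ?N)"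
  have "(\<lambda>z. \<sigma> *\<^sub>R (\<chi> i. z i)) \<in> measurable ?P (borel :: (real ^ 'd) measure)"
  proof (subst borel_measurable_euclidean_space, intro ballI)
    fix b :: "real ^ 'd"
    assume "b \<in> Basis"
    then obtain j where "b = axis j 1"
      by (auto simp: Basis_vec_def)
    then show "(\<lambda>z. (\<sigma> *\<^sub>R (\<chi> i. z i)) \<bullet> b) \<in> borel_measurable ?P"
      by (simp add: inner_axis)
  qed
  then have "(\<integral>\<^sup>+w. ennreal ((norm (m - c *\<^sub>R w))\<^sup>2) \<partial>gauss_noise \<sigma>)
      = (\<integral>\<^sup>+z. (\<Sum>i\<in>UNIV. ennreal ((m $ i - (c * \<sigma>) * z i)\<^sup>2)) \<partial>?P)"
    unfolding gauss_noise_def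
    by (simp add: nn_integral_distr power2_norm_vec algebra_simps)
  also have "\<dots> = (\<Sum>i\<in>UNIV. (\<integral>\<^sup>+z. ennreal ((m $ i - (c * \<sigma>) * z i)\<^sup>2) \<partial>?P))"
    by (intro nn_integral_sum) simp
  also have "\<dots> = (\<Sum>i\<in>UNIV. (\<integral>\<^sup>+u. ennreal ((m $ i - (c * \<sigma>) * u)\<^sup>2) \<partial>?N))"
  proof (intro sum.cong refl)
    fix i :: 'd
    have "(\<integral>\<^sup>+u. ennreal ((m $ i - (c * \<sigma>) * u)\<^sup>2) \<partial>?N)
        = (\<integral>\<^sup>+u. ennreal ((m $ i - (c * \<sigma>) * u)\<^sup>2) \<partial>distr ?P ?N (\<lambda>z. z i))"
      using distr_PiM_component[of UNIV "\<lambda>i. ?N" i] prob_space_normal_density by simp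
    also have "\<dots> = (\<integral>\<^sup>+z. ennreal ((m $ i - (c * \<sigma>) * z i)\<^sup>2) \<partial>?P)"
      by (rule nn_integral_distr) (auto intro: measurable_component_singleton)
    finally show "(\<integral>\<^sup>+z. ennreal ((m $ i - (c * \<sigma>) * z i)\<^sup>2) \<partial>?P)
        = (\<integral>\<^sup>+u. ennreal ((m $ i - (c * \<sigma>) * u)\<^sup>2) \<partial>?N)"
      by simp
  qed
  also have "\<dots> = (\<Sum>i\<in>UNIV. ennreal ((m $ i)\<^sup>2 + (c * \<sigma>)\<^sup>2))"
    by (simp only: nn_integral_std_normal_affine_sq)
  also have "\<dots> = ennreal (\<Sum>i\<in>UNIV. (m $ i)\<^sup>2 + (c * \<sigma>)\<^sup>2)"
    by (rule sum_ennreal) simp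
  also have "(\<Sum>i\<in>UNIV. (m $ i)\<^sup>2 + (c * \<sigma>)\<^sup>2) = (norm m)\<^sup>2 + c\<^sup>2 * real CARD('d) * \<sigma>\<^sup>2"
    by (simp add: sum.distrib power2_norm_vec power_mult_distrib)
  finally show ?thesis .
qed

section \<open>Uniform minibatches\<close>

lemma sum_lists_length_Suc:
  "(\<Sum>bs\<in>{bs. set bs \<subseteq> A \<and> length bs = Suc n}. f bs)
   = (\<Sum>bs\<in>{bs. set bs \<subseteq> A \<and> length bs = n}. \<Sum>i\<in>A. f (i # bs))"
proof -
  have "(\<Sum>bs\<in>{bs. set bs \<subseteq> A \<and> length bs = Suc n}. f bs)
      = (\<Sum>p\<in>{bs. set bs \<subseteq> A \<and> length bs = n} \<times> A. f ((\<lambda>(bs, i). i # bs) p))"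
    unfolding lists_length_Suc_eq by (rule sum.reindex[unfolded comp_def]) (rule inj_split_Cons)
  then show ?thesis
    by (simp add: sum.cartesian_product split_def)
qed

lemma sum_lists_sum_list_eq_0:
  fixes y :: "'b \<Rightarrow> 'a::real_vector"
  assumes "(\<Sum>i\<in>A. y i) = 0"
  shows "(\<Sum>bs\<in>{bs. set bs \<subseteq> A \<and> length bs = n}. \<Sum>i\<leftarrow>bs. y i) = 0"
proof (induction n)
  case (Suc n)
  then show ?case
    by (simp add: sum_lists_length_Suc sum.distrib assms sum_constant_scaleR
        scaleR_sum_right[symmetric])
qed simp

lemma sum_lists_norm_sum_list_sq:
  fixes y :: "'b \<Rightarrow> 'a::real_inner"
  assumes "finite A" and "(\<Sum>i\<in>A. y i) = 0"
  shows "real (card A) * (\<Sum>bs\<in>{bs. set bs \<subseteq> A \<and> length bs = n}. (norm (\<Sum>i\<leftarrow>bs. y i))\<^sup>2)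
         = real n * real (card A) ^ n * (\<Sum>i\<in>A. (norm (y i))\<^sup>2)"
proof (induction n)
  case (Suc n)
  let ?S = "{bs. set bs \<subseteq> A \<and> length bs = n}"
  let ?Y = "\<lambda>bs. \<Sum>i\<leftarrow>bs. y i"
  have "(\<Sum>bs\<in>{bs. set bs \<subseteq> A \<and> length bs = Suc n}. (norm (?Y bs))\<^sup>2)
      = (\<Sum>bs\<in>?S. \<Sum>i\<in>A. (norm (y i))\<^sup>2 + 2 * inner (y i) (?Y bs) + (norm (?Y bs))\<^sup>2)"
    by (simp add: sum_lists_length_Suc power2_norm_add)
  also have "\<dots> = (\<Sum>bs\<in>?S. (\<Sum>i\<in>A. (norm (y i))\<^sup>2) + real (card A) * (norm (?Y bs))\<^sup>2)"
    by (simp add: sum.distrib sum_distrib_left[symmetric] inner_sum_left[symmetric] assms(2))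
  also have "\<dots> = real (card A) ^ n * (\<Sum>i\<in>A. (norm (y i))\<^sup>2)
      + real (card A) * (\<Sum>bs\<in>?S. (norm (?Y bs))\<^sup>2)"
    by (simp add: sum.distrib sum_distrib_left card_lists_length_eq assms(1))
  finally show ?case
    using Suc.IH by (simp add: algebra_simps)
qed simp

definition sample_mean :: "nat \<Rightarrow> (nat \<Rightarrow> 'a::real_vector) \<Rightarrow> 'a" where
  "sample_mean N u = (1 / real N) *\<^sub>R (\<Sum>i<N. u i)"

lemma sum_diff_sample_mean: "1 \<le> N \<Longrightarrow> (\<Sum>i<N. u i - sample_mean N u) = 0"
  by (simp add: sum_subtractf sum_constant_scaleR sample_mean_def)

lemma sample_mean_diff: "sample_mean N (\<lambda>i. u i - v i) = sample_mean N u - sample_mean N v"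
  by (simp add: sample_mean_def sum_subtractf algebra_simps)

lemma sample_mean_scaleR: "sample_mean N (\<lambda>i. c *\<^sub>R u i) = c *\<^sub>R sample_mean N u"
  by (simp add: sample_mean_def scaleR_sum_right)

lemma norm_sample_mean_le:
  assumes "1 \<le> N" and "\<And>i. i < N \<Longrightarrow> norm (u i) \<le> b"
  shows "norm (sample_mean N u) \<le> b"
proof -
  have "norm (\<Sum>i<N. u i) \<le> real N * b"
    using norm_sum[of u "{..<N}"] sum_mono[of "{..<N}" "\<lambda>i. norm (u i)" "\<lambda>_. b"] assms(2) by simp
  then show ?thesis
    using assms(1) by (simp add: sample_mean_def field_simps)
qed

lemma sum_norm_sq_diff_sample_mean_le:
  fixes u :: "nat \<Rightarrow> 'a::real_inner"
  assumes "1 \<le> N"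
  shows "(\<Sum>i<N. (norm (u i - sample_mean N u))\<^sup>2) \<le> (\<Sum>i<N. (norm (u i - c))\<^sup>2)"
proof -
  let ?m = "sample_mean N u"
  have "(\<Sum>i<N. u i - ?m) = 0"
    using assms by (rule sum_diff_sample_mean)
  have "(\<Sum>i<N. (norm (u i - c))\<^sup>2) = (\<Sum>i<N. (norm ((u i - ?m) + (?m - c)))\<^sup>2)"
    by simp
  also have "\<dots> = (\<Sum>i<N. (norm (u i - ?m))\<^sup>2 + 2 * inner (u i - ?m) (?m - c) + (norm (?m - c))\<^sup>2)"
    by (simp only: power2_norm_add)
  also have "\<dots> = (\<Sum>i<N. (norm (u i - ?m))\<^sup>2) + 2 * inner (\<Sum>i<N. u i - ?m) (?m - c)
      + real N * (norm (?m - c))\<^sup>2"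
    by (simp add: sum.distrib sum_distrib_left inner_sum_left)
  finally show ?thesis
    using \<open>(\<Sum>i<N. u i - ?m) = 0\<close> by simp
qed

lemma nn_integral_pmf_of_set_ennreal:
  assumes "finite S" "S \<noteq> {}" "\<And>x. x \<in> S \<Longrightarrow> 0 \<le> f x"
  shows "(\<integral>\<^sup>+x. ennreal (f x) \<partial>pmf_of_set S) = ennreal ((\<Sum>x\<in>S. f x) / real (card S))"
  using assms
  by (simp add: nn_integral_pmf_of_set sum_ennreal divide_ennreal sum_nonneg card_gt_0_iff
      ennreal_of_nat_eq_real_of_nat)

lemma nn_integral_batch_pmf_sq:
  fixes u :: "nat \<Rightarrow> 'a::real_inner"
  assumes N: "1 \<le> N" and B: "1 \<le> B"
  shows "(\<integral>\<^sup>+bs. ennreal ((norm (a - c *\<^sub>R ((1 / real B) *\<^sub>R (\<Sum>i\<leftarrow>bs. u i))))\<^sup>2) \<partial>batch_pmf N B)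
    = ennreal ((norm (a - c *\<^sub>R sample_mean N u))\<^sup>2
        + c\<^sup>2 / (real B * real N) * (\<Sum>i<N. (norm (u i - sample_mean N u))\<^sup>2))"
proof -
  define S where "S = {bs. set bs \<subseteq> {..<N} \<and> length bs = B}"
  define y where "y i = u i - sample_mean N u" for i
  define Y where "Y bs = (\<Sum>i\<leftarrow>bs. y i)" for bs
  define b where "b = a - c *\<^sub>R sample_mean N u"
  have S: "finite S" "S \<noteq> {}" "card S = N ^ B"
    using N card_lists_length_eq[of "{..<N}" B] unfolding S_def
    by (auto intro!: finite_lists_length_eq exI[of _ "replicate B 0"])
  have y: "(\<Sum>i<N. y i) = 0"
    unfolding y_def using N by (rule sum_diff_sample_mean)
  have "(\<Sum>i\<leftarrow>bs. u i) = Y bs + real B *\<^sub>R sample_mean N u" if "bs \<in> S" for bs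
  proof -
    have "(\<Sum>i\<leftarrow>bs. y i + sample_mean N u) = Y bs + real (length bs) *\<^sub>R sample_mean N u"
      unfolding Y_def by (induction bs) (auto simp: algebra_simps)
    then show ?thesis
      using that by (simp add: S_def y_def)
  qed
  then have "a - c *\<^sub>R ((1 / real B) *\<^sub>R (\<Sum>i\<leftarrow>bs. u i)) = b - (c / real B) *\<^sub>R Y bs"
    if "bs \<in> S" for bs
    using that B by (simp add: b_def algebra_simps)
  then have sq: "(norm (a - c *\<^sub>R ((1 / real B) *\<^sub>R (\<Sum>i\<leftarrow>bs. u i))))\<^sup>2
      = (norm b)\<^sup>2 - 2 * (c / real B) * inner b (Y bs) + (c / real B)\<^sup>2 * (norm (Y bs))\<^sup>2"
    if "bs \<in> S" for bs
    using that by (simp add: power2_norm_diff power_mult_distrib power_divide power2_abs)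
  have "(\<Sum>bs\<in>S. (norm (a - c *\<^sub>R ((1 / real B) *\<^sub>R (\<Sum>i\<leftarrow>bs. u i))))\<^sup>2)
      = (\<Sum>bs\<in>S. (norm b)\<^sup>2 - 2 * (c / real B) * inner b (Y bs) + (c / real B)\<^sup>2 * (norm (Y bs))\<^sup>2)"
    by (rule sum.cong[OF refl sq])
  also have "\<dots> = real (card S) * (norm b)\<^sup>2 - 2 * (c / real B) * inner b (\<Sum>bs\<in>S. Y bs)
      + (c / real B)\<^sup>2 * (\<Sum>bs\<in>S. (norm (Y bs))\<^sup>2)"
    by (simp add: sum.distrib sum_subtractf sum_distrib_left inner_sum_right del: power_divide)
  also have "(\<Sum>bs\<in>S. Y bs) = 0"
    unfolding S_def Y_def by (rule sum_lists_sum_list_eq_0) (simp add: y)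
  also have "(\<Sum>bs\<in>S. (norm (Y bs))\<^sup>2) = real B * real N ^ B * (\<Sum>i<N. (norm (y i))\<^sup>2) / real N"
    using sum_lists_norm_sum_list_sq[of "{..<N}" y B] y N unfolding S_def Y_def
    by (simp add: eq_divide_eq mult.commute)
  finally have "(\<Sum>bs\<in>S. (norm (a - c *\<^sub>R ((1 / real B) *\<^sub>R (\<Sum>i\<leftarrow>bs. u i))))\<^sup>2)
      = real N ^ B * (norm b)\<^sup>2 + (c / real B)\<^sup>2 * (real B * real N ^ B * (\<Sum>i<N. (norm (y i))\<^sup>2) / real N)"
    using S(3) by simp
  then have "(\<Sum>bs\<in>S. (norm (a - c *\<^sub>R ((1 / real B) *\<^sub>R (\<Sum>i\<leftarrow>bs. u i))))\<^sup>2) / real (card S)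
      = (norm b)\<^sup>2 + c\<^sup>2 / (real B * real N) * (\<Sum>i<N. (norm (y i))\<^sup>2)"
    using S(3) N B by (simp add: field_simps power2_eq_square)
  then show ?thesis
    unfolding batch_pmf_def S_def[symmetric] b_def y_def
    using S by (subst nn_integral_pmf_of_set_ennreal) auto
qed

section \<open>Clipping\<close>

(* The factor min 1 (C / norm v) of clip, except that it is 1 rather than 0 at v = 0, so that
   1 - clip_factor v C vanishes whenever nothing is clipped. *)
definition clip_factor :: "'a::real_normed_vector \<Rightarrow> real \<Rightarrow> real" where
  "clip_factor v C = (if norm v \<le> C then 1 else C / norm v)"

lemma clip_eq_clip_factor: "clip v C = clip_factor v C *\<^sub>R v"
  unfolding clip_def clip_factor_def
  by (cases "v = 0") (auto simp: min_def field_simps)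

lemma clip_factor_le_1: "0 \<le> C \<Longrightarrow> clip_factor v C \<le> 1"
  by (simp add: clip_factor_def divide_le_eq_1)

lemma clip_factor_excess: "0 \<le> C \<Longrightarrow> (1 - clip_factor v C) * norm v = max 0 (norm v - C)"
  by (auto simp: clip_factor_def field_simps)

lemma clip_factor_threshold: "0 \<le> C \<Longrightarrow> (1 - clip_factor v C) * C \<le> (1 - clip_factor v C) * norm v"
  by (simp add: clip_factor_def divide_le_eq_1 mult_left_mono)

lemma clip_eq_closest_point:
  fixes v :: "real ^ 'd"
  assumes "0 \<le> C"
  shows "clip v C = closest_point (cball 0 C) v"
proof (rule closest_point_unique)
  show "convex (cball (0 :: real ^ 'd) C)" "closed (cball (0 :: real ^ 'd) C)"
    by auto
  show "clip v C \<in> cball 0 C"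
    using assms by (auto simp: clip_eq_clip_factor clip_factor_def)
  show "\<forall>z\<in>cball 0 C. dist v (clip v C) \<le> dist v z"
  proof
    fix z :: "real ^ 'd"
    assume "z \<in> cball 0 C"
    then have "norm v - C \<le> dist v z"
      using norm_triangle_ineq2[of v z] by (simp add: dist_norm)
    moreover have "v - clip v C = (1 - clip_factor v C) *\<^sub>R v"
      by (simp add: clip_eq_clip_factor algebra_simps)
    then have "dist v (clip v C) = max 0 (norm v - C)"
      using clip_factor_excess[OF assms, of v] clip_factor_le_1[OF assms, of v]
      by (simp add: dist_norm)
    ultimately show "dist v (clip v C) \<le> dist v z"
      by simp
  qed
qed

lemma norm_clip_diff_le:
  fixes v w :: "real ^ 'd"
  shows "0 \<le> C \<Longrightarrow> norm (clip v C - clip w C) \<le> norm (v - w)"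
  using closest_point_lipschitz[of "cball (0 :: real ^ 'd) C" v w]
  by (simp add: clip_eq_closest_point dist_norm)

section \<open>Bias of a clipped DiSK direction\<close>

(* The general bound 2 / |gamma| blows up as gamma -> 0; for -1 < gamma < 0 a finer argument gives
   2 + kappa. *)
definition clip_bias_factor :: "real \<Rightarrow> real \<Rightarrow> real" where
  "clip_bias_factor \<kappa> \<gamma> = (if -1 < \<gamma> \<and> \<gamma> < 0 then 2 + \<kappa> else 2 / \<bar>\<gamma>\<bar>)"

(* One data point: w, p and q are its gradients at x_t, x_{t-1} and x_t + gamma d_{t-1}, and
   s = L |eta| ||gtilde_{t-1}||; since d_{t-1} = - eta gtilde_{t-1}, smoothness gives the three
   distance bounds.  mix is the unclipped DiSK direction of the point. *)
locale disk_sample =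
  fixes \<kappa> \<gamma> C G s :: real and w p q :: "real ^ 'd"
  assumes kappa_pos: "0 < \<kappa>" and kappa_le_1: "\<kappa> \<le> 1" and gamma_nz: "\<gamma> \<noteq> 0"
    and C_pos: "0 < C" and C_ge: "(1 + 2 * (1 - \<kappa>) / \<kappa>) * G \<le> C"
    and norm_w: "norm w \<le> G" and norm_p: "norm p \<le> G" and norm_q: "norm q \<le> G"
    and dist_w_p: "norm (w - p) \<le> s" and dist_q_w: "norm (q - w) \<le> \<bar>\<gamma>\<bar> * s"
    and dist_p_q: "norm (p - q) \<le> \<bar>1 + \<gamma>\<bar> * s"
begin

definition coef :: real where
  "coef = (1 - \<kappa>) / (\<kappa> * \<gamma>)"

definition mix :: "real ^ 'd" where
  "mix = coef *\<^sub>R q + (1 - coef) *\<^sub>R w"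

lemma G_nonneg: "0 \<le> G"
  using norm_w norm_ge_zero order_trans by blast

lemma C_nonneg: "0 \<le> C"
  using C_pos by simp

lemma kappa_coef: "\<kappa> * coef = (1 - \<kappa>) / \<gamma>"
  unfolding coef_def using kappa_pos by simp

lemma abs_coef_gamma: "\<bar>coef\<bar> * \<bar>\<gamma>\<bar> = (1 - \<kappa>) / \<kappa>"
  unfolding coef_def using kappa_pos kappa_le_1 gamma_nz by (simp add: abs_divide abs_mult)

lemma mix_eq: "mix = w + coef *\<^sub>R (q - w)"
  unfolding mix_def by (simp add: algebra_simps)

lemma C_ge_coef: "G + 2 * (\<bar>coef\<bar> * \<bar>\<gamma>\<bar>) * G \<le> C"
proof -
  have "(1 + 2 * (1 - \<kappa>) / \<kappa>) * G = G + 2 * ((1 - \<kappa>) / \<kappa>) * G"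
    by (simp add: algebra_simps)
  then show ?thesis
    using C_ge unfolding abs_coef_gamma by linarith
qed

lemma G_le_kappa_C: "G \<le> \<kappa> * C"
proof -
  have "G \<le> (2 - \<kappa>) * G"
    using mult_left_le_one_le[of G \<kappa>] kappa_pos kappa_le_1 G_nonneg by (simp add: algebra_simps)
  also have "\<dots> = \<kappa> * ((1 + 2 * (1 - \<kappa>) / \<kappa>) * G)"
    using kappa_pos by (simp add: field_simps)
  also have "\<dots> \<le> \<kappa> * C"
    using C_ge kappa_pos by (intro mult_left_mono) auto
  finally show ?thesis .
qed

lemma dist_q_w_le: "norm (q - w) \<le> 2 * G"
  using norm_triangle_ineq4[of q w] norm_w norm_q by simp

lemma clip_excess_le:
  "(1 - clip_factor mix C) * norm mix \<le> \<bar>coef\<bar> * max 0 (norm (q - w) - 2 * \<bar>\<gamma>\<bar> * G)"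
proof -
  have "norm mix \<le> G + \<bar>coef\<bar> * norm (q - w)"
    using norm_triangle_ineq[of w "coef *\<^sub>R (q - w)"] norm_w by (simp add: mix_eq)
  with C_ge_coef have "norm mix - C \<le> \<bar>coef\<bar> * (norm (q - w) - 2 * \<bar>\<gamma>\<bar> * G)"
    by (simp add: algebra_simps)
  also have "\<dots> \<le> \<bar>coef\<bar> * max 0 (norm (q - w) - 2 * \<bar>\<gamma>\<bar> * G)"
    by (intro mult_left_mono) auto
  finally show ?thesis
    using C_pos by (simp add: clip_factor_excess)
qed

lemma outside_bias_terms_le:
  assumes "\<not> (-1 < \<gamma> \<and> \<gamma> < 0)"
  shows "\<bar>1 + \<gamma>\<bar> * norm (w - p) + norm (p - q) + max 0 (norm (q - w) - 2 * \<bar>\<gamma>\<bar> * G)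
    \<le> 2 * \<bar>1 + \<gamma>\<bar> * s"
proof (cases "s \<le> 2 * G")
  case True
  then have "norm (q - w) - 2 * \<bar>\<gamma>\<bar> * G \<le> 0"
    using dist_q_w mult_left_mono[OF True, of "\<bar>\<gamma>\<bar>"] by simp
  then show ?thesis
    using dist_p_q mult_left_mono[OF dist_w_p, of "\<bar>1 + \<gamma>\<bar>"] by simp
next
  case large: False
  have "max 0 (norm (q - w) - 2 * \<bar>\<gamma>\<bar> * G) \<le> \<bar>1 + \<gamma>\<bar> * (s - 2 * G)"
  proof (cases "0 < \<gamma>")
    case True
    then have "norm (q - w) - 2 * \<bar>\<gamma>\<bar> * G \<le> \<bar>\<gamma>\<bar> * (s - 2 * G)"
      using dist_q_w by (simp add: algebra_simps)
    also have "\<dots> \<le> \<bar>1 + \<gamma>\<bar> * (s - 2 * G)"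
      using True large by (intro mult_right_mono) auto
    finally show ?thesis
      using large by simp
  next
    case False
    with assms gamma_nz have "1 \<le> \<bar>\<gamma>\<bar>"
      by auto
    then have "2 * G \<le> 2 * \<bar>\<gamma>\<bar> * G"
      using G_nonneg mult_right_mono[of 1 "\<bar>\<gamma>\<bar>" G] by simp
    then show ?thesis
      using dist_q_w_le large by simp
  qed
  moreover have "\<bar>1 + \<gamma>\<bar> * norm (w - p) \<le> \<bar>1 + \<gamma>\<bar> * (2 * G)"
    using norm_triangle_ineq4[of w p] norm_w norm_p by (intro mult_left_mono) auto
  ultimately show ?thesis
    using dist_p_q by (simp add: algebra_simps)
qed

lemma bias_outside:
  assumes "\<not> (-1 < \<gamma> \<and> \<gamma> < 0)"
  shows "norm (w - (1 - \<kappa>) *\<^sub>R p - \<kappa> *\<^sub>R clip mix C) \<le> (1 - \<kappa>) * (2 / \<bar>\<gamma>\<bar>) * \<bar>1 + \<gamma>\<bar> * s"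
proof -
  let ?\<theta> = "clip_factor mix C"
  define c where "c = (1 - \<kappa>) + \<kappa> * coef"
  have "c = (1 - \<kappa>) * (1 + \<gamma>) / \<gamma>"
    unfolding c_def kappa_coef using gamma_nz by (simp add: field_simps)
  then have abs_c: "\<bar>c\<bar> = (1 - \<kappa>) / \<bar>\<gamma>\<bar> * \<bar>1 + \<gamma>\<bar>"
    using kappa_le_1 by (simp add: abs_mult abs_divide)
  have "w - (1 - \<kappa>) *\<^sub>R p - \<kappa> *\<^sub>R clip mix C
      = c *\<^sub>R (w - p) + (\<kappa> * coef) *\<^sub>R (p - q) + (\<kappa> * (1 - ?\<theta>)) *\<^sub>R mix"
    by (simp add: clip_eq_clip_factor c_def mix_eq algebra_simps)
  then have "norm (w - (1 - \<kappa>) *\<^sub>R p - \<kappa> *\<^sub>R clip mix C)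
      \<le> norm (c *\<^sub>R (w - p)) + norm ((\<kappa> * coef) *\<^sub>R (p - q)) + norm ((\<kappa> * (1 - ?\<theta>)) *\<^sub>R mix)"
    by (simp only: norm_triangle_3)
  also have "\<dots> = \<bar>c\<bar> * norm (w - p) + \<bar>\<kappa> * coef\<bar> * norm (p - q) + \<kappa> * ((1 - ?\<theta>) * norm mix)"
    using kappa_pos clip_factor_le_1[OF C_nonneg, of mix] by simp
  also have "\<dots> \<le> (1 - \<kappa>) / \<bar>\<gamma>\<bar> * (\<bar>1 + \<gamma>\<bar> * norm (w - p) + norm (p - q)
      + max 0 (norm (q - w) - 2 * \<bar>\<gamma>\<bar> * G))"
  proof -
    have "\<kappa> * ((1 - ?\<theta>) * norm mix) \<le> \<bar>\<kappa> * coef\<bar> * max 0 (norm (q - w) - 2 * \<bar>\<gamma>\<bar> * G)"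
      using mult_left_mono[OF clip_excess_le, of \<kappa>] kappa_pos by (simp add: abs_mult)
    then show ?thesis
      using kappa_le_1 by (simp add: abs_c kappa_coef abs_divide algebra_simps)
  qed
  also have "\<dots> \<le> (1 - \<kappa>) / \<bar>\<gamma>\<bar> * (2 * \<bar>1 + \<gamma>\<bar> * s)"
    using outside_bias_terms_le[OF assms] kappa_le_1 by (intro mult_left_mono) auto
  also have "\<dots> = (1 - \<kappa>) * (2 / \<bar>\<gamma>\<bar>) * \<bar>1 + \<gamma>\<bar> * s"
    by simp
  finally show ?thesis .
qed

lemma inside_clip_factor_ge:
  assumes "-1 < \<gamma>" "\<gamma> < 0"
  shows "- \<gamma> \<le> clip_factor mix C"
proof (cases "norm mix \<le> C")
  case False
  have "- \<gamma> * norm mix \<le> - \<gamma> * (G + \<bar>coef\<bar> * norm (q - w))"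
    using norm_triangle_ineq[of w "coef *\<^sub>R (q - w)"] norm_w assms
    by (intro mult_left_mono) (auto simp: mix_eq)
  also have "\<dots> \<le> G + 2 * (\<bar>coef\<bar> * \<bar>\<gamma>\<bar>) * G"
  proof -
    have "- \<gamma> * G \<le> G"
      using mult_left_le_one_le[of G "- \<gamma>"] assms G_nonneg by simp
    moreover have "- \<gamma> * (\<bar>coef\<bar> * norm (q - w)) \<le> - \<gamma> * (\<bar>coef\<bar> * (2 * G))"
      using assms dist_q_w_le by (intro mult_left_mono) auto
    moreover have "2 * (\<bar>coef\<bar> * \<bar>\<gamma>\<bar>) * G = - \<gamma> * (\<bar>coef\<bar> * (2 * G))"
      using assms by (simp add: algebra_simps)
    ultimately show ?thesis
      unfolding distrib_left by linarith
  qed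
  also have "\<dots> \<le> C"
    by (rule C_ge_coef)
  finally have "- \<gamma> * norm mix \<le> C" .
  moreover have "0 < norm mix"
    using False C_pos by linarith
  ultimately show ?thesis
    using False by (simp add: clip_factor_def pos_le_divide_eq)
qed (use assms in \<open>simp add: clip_factor_def\<close>)

lemma inside_shrink_term_le:
  assumes "-1 < \<gamma>" "\<gamma> < 0"
  shows "(1 - clip_factor mix C) * norm w \<le> (1 - \<kappa>) * \<bar>1 + \<gamma>\<bar> * s"
proof -
  let ?\<theta> = "clip_factor mix C"
  have \<theta>: "0 \<le> 1 - ?\<theta>"
    using clip_factor_le_1[OF C_nonneg] by simp
  have "(1 - ?\<theta>) * norm w \<le> (1 - ?\<theta>) * (\<kappa> * C)"
    using norm_w G_le_kappa_C \<theta> by (intro mult_left_mono) auto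
  also have "\<dots> = \<kappa> * ((1 - ?\<theta>) * C)"
    by simp
  also have "\<dots> \<le> \<kappa> * ((1 - ?\<theta>) * norm mix)"
    using mult_left_mono[OF clip_factor_threshold[OF C_nonneg, of mix], of \<kappa>] kappa_pos by simp
  also have "\<dots> \<le> \<kappa> * (\<bar>coef\<bar> * ((1 + \<gamma>) * norm (q - w)))"
  proof -
    have "norm (q - w) - 2 * \<bar>\<gamma>\<bar> * G \<le> (1 + \<gamma>) * norm (q - w)"
      using assms dist_q_w_le mult_left_mono[OF dist_q_w_le, of "- \<gamma>"] by (simp add: algebra_simps)
    then have "max 0 (norm (q - w) - 2 * \<bar>\<gamma>\<bar> * G) \<le> (1 + \<gamma>) * norm (q - w)"
      using assms by simp
    then have "(1 - ?\<theta>) * norm mix \<le> \<bar>coef\<bar> * ((1 + \<gamma>) * norm (q - w))"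
      using clip_excess_le by (meson abs_ge_zero mult_left_mono order_trans)
    then show ?thesis
      using kappa_pos by simp
  qed
  also have "\<dots> \<le> \<kappa> * (\<bar>coef\<bar> * ((1 + \<gamma>) * (\<bar>\<gamma>\<bar> * s)))"
    using dist_q_w assms kappa_pos by (intro mult_left_mono) auto
  also have "\<dots> = \<kappa> * (\<bar>coef\<bar> * \<bar>\<gamma>\<bar>) * ((1 + \<gamma>) * s)"
    by (simp add: algebra_simps)
  also have "\<dots> = \<kappa> * ((1 - \<kappa>) / \<kappa>) * ((1 + \<gamma>) * s)"
    by (simp only: abs_coef_gamma)
  also have "\<dots> = (1 - \<kappa>) * \<bar>1 + \<gamma>\<bar> * s"
    using kappa_pos assms by simp
  finally show ?thesis .
qed

lemma inside_extrapolation_term_le: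
  assumes "-1 < \<gamma>" "\<gamma> < 0"
  defines "k \<equiv> (1 - \<kappa>) / (- \<gamma>)"
  shows "\<bar>clip_factor mix C * k - (1 - \<kappa>)\<bar> * norm (q - w) \<le> (1 - \<kappa>) * (\<bar>1 + \<gamma>\<bar> * s)"
proof -
  let ?\<theta> = "clip_factor mix C"
  have "0 \<le> k"
    unfolding k_def using assms kappa_le_1 by (intro divide_nonneg_pos) auto
  moreover have "- \<gamma> * k = 1 - \<kappa>"
    unfolding k_def using assms by simp
  ultimately have lo: "0 \<le> ?\<theta> * k - (1 - \<kappa>)" and hi: "?\<theta> * k - (1 - \<kappa>) \<le> k - (1 - \<kappa>)"
    using mult_right_mono[OF inside_clip_factor_ge[OF assms(1,2)], of k]
      mult_right_mono[OF clip_factor_le_1[OF C_nonneg, of mix], of k] by auto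
  moreover have "norm (q - w) \<le> - \<gamma> * s"
    using dist_q_w assms by simp
  ultimately have "(?\<theta> * k - (1 - \<kappa>)) * norm (q - w) \<le> (k - (1 - \<kappa>)) * (- \<gamma> * s)"
    by (intro mult_mono) auto
  also have "\<dots> = (1 - \<kappa>) * (\<bar>1 + \<gamma>\<bar> * s)"
    using assms by (simp add: k_def field_simps)
  finally show ?thesis
    using lo by simp
qed

lemma bias_inside:
  assumes "-1 < \<gamma>" "\<gamma> < 0"
  shows "norm (w - (1 - \<kappa>) *\<^sub>R p - \<kappa> *\<^sub>R clip mix C) \<le> (1 - \<kappa>) * (2 + \<kappa>) * \<bar>1 + \<gamma>\<bar> * s"
proof -
  let ?\<theta> = "clip_factor mix C"
  define k where "k = (1 - \<kappa>) / (- \<gamma>)"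
  have "\<kappa> * coef = - k"
    unfolding k_def kappa_coef by simp
  moreover have "\<kappa> *\<^sub>R clip mix C = (\<kappa> * ?\<theta>) *\<^sub>R w + (?\<theta> * (\<kappa> * coef)) *\<^sub>R (q - w)"
    by (simp add: clip_eq_clip_factor mix_eq algebra_simps)
  ultimately have "w - (1 - \<kappa>) *\<^sub>R p - \<kappa> *\<^sub>R clip mix C
      = (1 - \<kappa>) *\<^sub>R (q - p) + (?\<theta> * k - (1 - \<kappa>)) *\<^sub>R (q - w) + (\<kappa> * (1 - ?\<theta>)) *\<^sub>R w"
    by (simp add: algebra_simps)
  then have "norm (w - (1 - \<kappa>) *\<^sub>R p - \<kappa> *\<^sub>R clip mix C)
      \<le> norm ((1 - \<kappa>) *\<^sub>R (q - p)) + norm ((?\<theta> * k - (1 - \<kappa>)) *\<^sub>R (q - w))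
        + norm ((\<kappa> * (1 - ?\<theta>)) *\<^sub>R w)"
    by (simp only: norm_triangle_3)
  also have "\<dots> = (1 - \<kappa>) * norm (q - p) + \<bar>?\<theta> * k - (1 - \<kappa>)\<bar> * norm (q - w)
      + \<kappa> * ((1 - ?\<theta>) * norm w)"
    using kappa_pos kappa_le_1 clip_factor_le_1[OF C_nonneg, of mix] by simp
  also have "\<dots> \<le> (1 - \<kappa>) * (\<bar>1 + \<gamma>\<bar> * s) + (1 - \<kappa>) * (\<bar>1 + \<gamma>\<bar> * s)
      + \<kappa> * ((1 - \<kappa>) * \<bar>1 + \<gamma>\<bar> * s)"
  proof -
    have "(1 - \<kappa>) * norm (q - p) \<le> (1 - \<kappa>) * (\<bar>1 + \<gamma>\<bar> * s)"
      using dist_p_q kappa_le_1 by (intro mult_left_mono) (auto simp: norm_minus_commute)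
    moreover have "\<kappa> * ((1 - ?\<theta>) * norm w) \<le> \<kappa> * ((1 - \<kappa>) * \<bar>1 + \<gamma>\<bar> * s)"
      using inside_shrink_term_le[OF assms] kappa_pos by (intro mult_left_mono) auto
    ultimately show ?thesis
      using inside_extrapolation_term_le[OF assms] unfolding k_def by linarith
  qed
  finally show ?thesis
    by (simp add: algebra_simps)
qed

lemma bias_le:
  "norm (w - (1 - \<kappa>) *\<^sub>R p - \<kappa> *\<^sub>R clip mix C) \<le> (1 - \<kappa>) * clip_bias_factor \<kappa> \<gamma> * \<bar>1 + \<gamma>\<bar> * s"
  using bias_inside bias_outside by (auto simp: clip_bias_factor_def)

end

section \<open>The scalar recursion\<close>

definition disk_M :: "real \<Rightarrow> real \<Rightarrow> real" where
  "disk_M \<kappa> \<gamma> = 1 + 4 * (2 + 1 / \<kappa> + \<bar>1 + \<gamma>\<bar>) / \<gamma>\<^sup>2"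

lemma clip_bias_factor_sq_le:
  assumes kappa: "0 < \<kappa>" "\<kappa> \<le> 1" and gamma: "\<gamma> \<noteq> 0"
  shows "(clip_bias_factor \<kappa> \<gamma>)\<^sup>2 * (1 / \<kappa> + \<bar>1 + \<gamma>\<bar>) \<le> disk_M \<kappa> \<gamma>"
proof (cases "-1 < \<gamma> \<and> \<gamma> < 0")
  case False
  then have "clip_bias_factor \<kappa> \<gamma> = 2 / \<bar>\<gamma>\<bar>"
    unfolding clip_bias_factor_def by (rule if_not_P)
  then have "(clip_bias_factor \<kappa> \<gamma>)\<^sup>2 * (1 / \<kappa> + \<bar>1 + \<gamma>\<bar>) = 4 * (1 / \<kappa> + \<bar>1 + \<gamma>\<bar>) / \<gamma>\<^sup>2"
    by (simp add: power_divide)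
  also have "\<dots> \<le> 4 * (2 + 1 / \<kappa> + \<bar>1 + \<gamma>\<bar>) / \<gamma>\<^sup>2"
    by (intro divide_right_mono mult_left_mono) auto
  finally show ?thesis
    by (simp add: disk_M_def)
next
  case True
  define e where "e = \<bar>1 + \<gamma>\<bar>"
  have e: "0 \<le> e" "e < 1" "\<gamma>\<^sup>2 = (1 - e)\<^sup>2"
    using True by (auto simp: e_def power2_eq_square algebra_simps)
  have "(clip_bias_factor \<kappa> \<gamma>)\<^sup>2 * (1 / \<kappa> + e) = (4 + 4 * \<kappa> + \<kappa>\<^sup>2) / \<kappa> + (2 + \<kappa>)\<^sup>2 * e"
    using True kappa by (simp add: clip_bias_factor_def power2_eq_square field_simps)
  also have "\<dots> \<le> 4 / \<kappa> + 5 + 9 * e"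
  proof -
    have "(4 + 4 * \<kappa> + \<kappa>\<^sup>2) / \<kappa> = 4 / \<kappa> + 4 + \<kappa>"
      using kappa by (simp add: field_simps power2_eq_square)
    moreover have "(2 + \<kappa>)\<^sup>2 \<le> 3\<^sup>2"
      using kappa by (intro power_mono) auto
    ultimately show ?thesis
      using kappa e mult_right_mono[of "(2 + \<kappa>)\<^sup>2" "3\<^sup>2" e] by simp
  qed
  also have "\<dots> \<le> 1 + 4 * (2 + 1 / \<kappa> + e) * (1 + e)"
    using kappa e by (simp add: algebra_simps add_divide_distrib)
  also have "\<dots> \<le> 1 + 4 * (2 + 1 / \<kappa> + e) * (1 / (1 - e)\<^sup>2)"
  proof -
    have "(1 - e)\<^sup>2 * (1 + e) \<le> (1 - e) * (1 + e)"
      using e by (simp add: power2_eq_square mult_left_le_one_le)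
    also have "\<dots> \<le> 1"
      by (simp add: algebra_simps)
    finally have "1 + e \<le> 1 / (1 - e)\<^sup>2"
      using e by (simp add: field_simps)
    then show ?thesis
      using kappa e by (intro add_left_mono mult_left_mono) auto
  qed
  finally show ?thesis
    by (simp add: disk_M_def e_def[symmetric] e)
qed

lemma bias_square_le:
  fixes \<kappa> e h K P Q M :: real
  assumes "0 < \<kappa>" "0 \<le> e" "0 \<le> h" "0 \<le> K" "0 \<le> P" "0 \<le> Q"
    and M: "K\<^sup>2 * (1 / \<kappa> + e) \<le> M"
  shows "(P + K * e * h * (P + Q))\<^sup>2 \<le> (1 + e * \<kappa>) * P\<^sup>2 + 2 * e * h\<^sup>2 * M * (P\<^sup>2 + Q\<^sup>2)"
proof -
  define X where "X = K * h * (P + Q)"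
  have young: "2 * P * X \<le> \<kappa> * P\<^sup>2 + X\<^sup>2 / \<kappa>"
  proof -
    have "0 \<le> (\<kappa> * P - X)\<^sup>2 / \<kappa>"
      using assms by simp
    also have "\<dots> = \<kappa> * P\<^sup>2 + X\<^sup>2 / \<kappa> - 2 * P * X"
      using assms by (simp add: field_simps power2_eq_square)
    finally show ?thesis
      by simp
  qed
  have X2: "X\<^sup>2 \<le> 2 * K\<^sup>2 * h\<^sup>2 * (P\<^sup>2 + Q\<^sup>2)"
  proof -
    have "(P + Q)\<^sup>2 \<le> 2 * (P\<^sup>2 + Q\<^sup>2)"
      using sum_squares_bound[of P Q] by (simp add: power2_sum)
    then have "X\<^sup>2 \<le> (K * h)\<^sup>2 * (2 * (P\<^sup>2 + Q\<^sup>2))"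
      unfolding X_def power_mult_distrib[of "K * h"] by (intro mult_left_mono) auto
    then show ?thesis
      by (simp add: power_mult_distrib algebra_simps)
  qed
  have "(P + K * e * h * (P + Q))\<^sup>2 = P\<^sup>2 + e * (2 * P * X) + e\<^sup>2 * X\<^sup>2"
    by (simp add: X_def power2_eq_square algebra_simps)
  also have "\<dots> \<le> P\<^sup>2 + e * (\<kappa> * P\<^sup>2 + X\<^sup>2 / \<kappa>) + e\<^sup>2 * X\<^sup>2"
    using young assms by (simp add: mult_left_mono)
  also have "\<dots> = (1 + e * \<kappa>) * P\<^sup>2 + e * (1 / \<kappa> + e) * X\<^sup>2"
    using assms by (simp add: field_simps power2_eq_square)
  also have "\<dots> \<le> (1 + e * \<kappa>) * P\<^sup>2 + e * (1 / \<kappa> + e) * (2 * K\<^sup>2 * h\<^sup>2 * (P\<^sup>2 + Q\<^sup>2))"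
    using X2 assms by (intro add_left_mono mult_left_mono) auto
  also have "\<dots> = (1 + e * \<kappa>) * P\<^sup>2 + 2 * e * h\<^sup>2 * (P\<^sup>2 + Q\<^sup>2) * (K\<^sup>2 * (1 / \<kappa> + e))"
    by (simp add: algebra_simps)
  also have "\<dots> \<le> (1 + e * \<kappa>) * P\<^sup>2 + 2 * e * h\<^sup>2 * (P\<^sup>2 + Q\<^sup>2) * M"
    using M assms by (intro add_left_mono mult_left_mono) auto
  finally show ?thesis
    by (simp add: algebra_simps)
qed

(* P = ||Delta_{t-1}||, Q = ||grad F(x_{t-1})||, r = ||gtilde_{t-1}||, h = L |eta|, b bounds the
   conditional mean and V the empirical variance of the clipped directions. *)
lemma tracking_error_algebra:
  fixes \<kappa> e h K M P Q r b V \<sigma> B :: real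
  assumes kappa: "0 < \<kappa>" "\<kappa> \<le> 1"
    and nonneg: "0 \<le> e" "0 \<le> h" "0 \<le> K" "0 \<le> P" "0 \<le> Q" "0 \<le> b" "0 \<le> r"
    and r: "r \<le> P + Q" and B: "1 \<le> B"
    and bias: "b \<le> (1 - \<kappa>) * P + (1 - \<kappa>) * K * e * (h * r)"
    and var: "V \<le> 2 * \<sigma>\<^sup>2 + 2 * ((1 - \<kappa>) / \<kappa>)\<^sup>2 * (h * r)\<^sup>2"
    and M: "K\<^sup>2 * (1 / \<kappa> + e) \<le> M"
  shows "b\<^sup>2 + \<kappa>\<^sup>2 * V / B
    \<le> (1 - \<kappa>)\<^sup>2 * (1 + 4 * h\<^sup>2 + e * (\<kappa> + 2 * h\<^sup>2 * M)) * P\<^sup>2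
      + 2 * h\<^sup>2 * (1 - \<kappa>)\<^sup>2 * (2 + e * M) * Q\<^sup>2 + \<kappa>\<^sup>2 * (2 + e) * \<sigma>\<^sup>2 / B"
proof -
  have "(1 - \<kappa>) * K * e * (h * r) \<le> (1 - \<kappa>) * K * e * (h * (P + Q))"
    using r kappa nonneg by (intro mult_left_mono) auto
  then have "b \<le> (1 - \<kappa>) * (P + K * e * h * (P + Q))"
    using bias by (simp add: algebra_simps)
  then have "b\<^sup>2 \<le> (1 - \<kappa>)\<^sup>2 * (P + K * e * h * (P + Q))\<^sup>2"
    using nonneg by (metis power_mono power_mult_distrib)
  also have "\<dots> \<le> (1 - \<kappa>)\<^sup>2 * ((1 + e * \<kappa>) * P\<^sup>2 + 2 * e * h\<^sup>2 * M * (P\<^sup>2 + Q\<^sup>2))"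
    using bias_square_le[OF kappa(1) nonneg(1-5) M] by (intro mult_left_mono) auto
  finally have b2: "b\<^sup>2 \<le> \<dots>" .
  have "r\<^sup>2 \<le> (P + Q)\<^sup>2"
    using r nonneg by (intro power_mono) auto
  also have "\<dots> \<le> 2 * (P\<^sup>2 + Q\<^sup>2)"
    using sum_squares_bound[of P Q] by (simp add: power2_sum)
  finally have r2: "r\<^sup>2 \<le> 2 * (P\<^sup>2 + Q\<^sup>2)" .
  have "\<kappa>\<^sup>2 * V \<le> \<kappa>\<^sup>2 * (2 * \<sigma>\<^sup>2 + 2 * ((1 - \<kappa>) / \<kappa>)\<^sup>2 * (h * r)\<^sup>2)"
    using var by (intro mult_left_mono) auto
  also have "\<dots> = 2 * \<kappa>\<^sup>2 * \<sigma>\<^sup>2 + 2 * (1 - \<kappa>)\<^sup>2 * h\<^sup>2 * r\<^sup>2"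
    using kappa by (simp add: power_divide power_mult_distrib field_simps)
  finally have "\<kappa>\<^sup>2 * V / B \<le> (2 * \<kappa>\<^sup>2 * \<sigma>\<^sup>2 + 2 * (1 - \<kappa>)\<^sup>2 * h\<^sup>2 * r\<^sup>2) / B"
    using B by (intro divide_right_mono) auto
  also have "\<dots> \<le> 2 * \<kappa>\<^sup>2 * \<sigma>\<^sup>2 / B + 2 * (1 - \<kappa>)\<^sup>2 * h\<^sup>2 * r\<^sup>2"
    using divide_left_mono[OF B, of "2 * (1 - \<kappa>)\<^sup>2 * h\<^sup>2 * r\<^sup>2"] B by (simp add: add_divide_distrib)
  also have "\<dots> \<le> 2 * \<kappa>\<^sup>2 * \<sigma>\<^sup>2 / B + 2 * (1 - \<kappa>)\<^sup>2 * h\<^sup>2 * (2 * (P\<^sup>2 + Q\<^sup>2))"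
    using r2 by (intro add_left_mono mult_left_mono) auto
  finally have v2: "\<kappa>\<^sup>2 * V / B \<le> \<dots>" .
  have "0 \<le> e * \<kappa>\<^sup>2 * \<sigma>\<^sup>2 / B"
    using nonneg B by simp
  then show ?thesis
    using b2 v2 by (simp add: algebra_simps add_divide_distrib)
qed

section \<open>The DiSK step\<close>

lemma gradient_eq_sample_mean:
  fixes f :: "nat \<Rightarrow> 'a::real_inner \<Rightarrow> real"
  assumes "\<And>i. i < N \<Longrightarrow> (f i has_derivative (\<lambda>h. inner (gf i x) h)) (at x)"
    and "\<And>y. F y = (\<Sum>i<N. f i y) / real N"
    and "(F has_derivative (\<lambda>h. inner (GF x) h)) (at x)"
  shows "GF x = sample_mean N (\<lambda>i. gf i x)"
proof -
  have "F = (\<lambda>y. (\<Sum>i<N. f i y) * (1 / real N))"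
    using assms(2) by (auto simp: fun_eq_iff)
  moreover have "((\<lambda>y. (\<Sum>i<N. f i y) * (1 / real N))
      has_derivative (\<lambda>h. (\<Sum>i<N. inner (gf i x) h) * (1 / real N))) (at x)"
    by (intro has_derivative_mult_left has_derivative_sum assms(1)) simp
  ultimately have "(\<lambda>h. inner (GF x) h) = (\<lambda>h. inner (sample_mean N (\<lambda>i. gf i x)) h)"
    using has_derivative_unique[OF assms(3)]
    by (simp add: sample_mean_def inner_sum_left algebra_simps)
  then show ?thesis
    by (metis vector_eq_rdot)
qed

definition disk_clipped_grad ::
  "(nat \<Rightarrow> real ^ 'd \<Rightarrow> real ^ 'd) \<Rightarrow> real \<Rightarrow> real \<Rightarrow> real \<Rightarrow> real ^ 'd \<Rightarrow> real ^ 'd \<Rightarrow> nat \<Rightarrow> real ^ 'd"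
  where
  "disk_clipped_grad gf \<gamma> \<kappa> C x d i =
     clip (((1 - \<kappa>) / (\<kappa> * \<gamma>)) *\<^sub>R gf i (x + \<gamma> *\<^sub>R d) + (1 - (1 - \<kappa>) / (\<kappa> * \<gamma>)) *\<^sub>R gf i x) C"

lemma disk_step_gtilde:
  "fst (snd (disk_step gf \<eta> \<gamma> \<kappa> C B (x, gt, d) bs w))
   = (1 - \<kappa>) *\<^sub>R gt + \<kappa> *\<^sub>R ((1 / real B) *\<^sub>R (\<Sum>i\<leftarrow>bs. disk_clipped_grad gf \<gamma> \<kappa> C x d i) + w)"
  by (simp add: disk_step_def disk_clipped_grad_def Let_def)

lemma nn_integral_disk_step_error:
  fixes gf :: "nat \<Rightarrow> real ^ 'd \<Rightarrow> real ^ 'd" and \<gamma> \<kappa> C :: real and x d :: "real ^ 'd"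
  assumes N: "1 \<le> N" and B: "1 \<le> B"
  defines "u \<equiv> disk_clipped_grad gf \<gamma> \<kappa> C x d"
  shows "(\<integral>\<^sup>+bs. \<integral>\<^sup>+w. ennreal ((norm (v - fst (snd (disk_step gf \<eta> \<gamma> \<kappa> C B (x, gt, d) bs w))))\<^sup>2)
      \<partial>gauss_noise \<sigma> \<partial>batch_pmf N B)
    = ennreal ((norm (v - (1 - \<kappa>) *\<^sub>R gt - \<kappa> *\<^sub>R sample_mean N u))\<^sup>2
        + \<kappa>\<^sup>2 / (real B * real N) * (\<Sum>i<N. (norm (u i - sample_mean N u))\<^sup>2)
        + \<kappa>\<^sup>2 * real CARD('d) * \<sigma>\<^sup>2)"
proof -
  let ?a = "v - (1 - \<kappa>) *\<^sub>R gt"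
  let ?m = "\<lambda>bs. ?a - \<kappa> *\<^sub>R ((1 / real B) *\<^sub>R (\<Sum>i\<leftarrow>bs. u i))"
  let ?c = "\<kappa>\<^sup>2 * real CARD('d) * \<sigma>\<^sup>2"
  have "(\<integral>\<^sup>+w. ennreal ((norm (v - fst (snd (disk_step gf \<eta> \<gamma> \<kappa> C B (x, gt, d) bs w))))\<^sup>2) \<partial>gauss_noise \<sigma>)
      = ennreal ((norm (?m bs))\<^sup>2) + ennreal ?c" for bs
    using nn_integral_gauss_noise_sq[where m = "?m bs" and c = \<kappa> and \<sigma> = \<sigma>]
    by (simp add: disk_step_gtilde u_def algebra_simps ennreal_plus)
  then have "(\<integral>\<^sup>+bs. \<integral>\<^sup>+w. ennreal ((norm (v - fst (snd (disk_step gf \<eta> \<gamma> \<kappa> C B (x, gt, d) bs w))))\<^sup>2)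
      \<partial>gauss_noise \<sigma> \<partial>batch_pmf N B)
      = (\<integral>\<^sup>+bs. ennreal ((norm (?m bs))\<^sup>2) \<partial>batch_pmf N B) + ennreal ?c"
    by (simp add: nn_integral_add measure_pmf.emeasure_space_1)
  also have "\<dots> = ennreal ((norm (?a - \<kappa> *\<^sub>R sample_mean N u))\<^sup>2
        + \<kappa>\<^sup>2 / (real B * real N) * (\<Sum>i<N. (norm (u i - sample_mean N u))\<^sup>2)) + ennreal ?c"
    by (simp only: nn_integral_batch_pmf_sq[OF N B])
  also have "\<dots> = ennreal ((norm (?a - \<kappa> *\<^sub>R sample_mean N u))\<^sup>2
        + \<kappa>\<^sup>2 / (real B * real N) * (\<Sum>i<N. (norm (u i - sample_mean N u))\<^sup>2) + ?c)"
    by (intro ennreal_plus[symmetric] add_nonneg_nonneg mult_nonneg_nonneg sum_nonneg) auto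
  finally show ?thesis
    by (simp add: algebra_simps)
qed

locale disk_setting =
  fixes N :: nat and gf :: "nat \<Rightarrow> real ^ 'd \<Rightarrow> real ^ 'd" and GF :: "real ^ 'd \<Rightarrow> real ^ 'd"
    and L G \<sigma> \<kappa> \<gamma> C :: real
  assumes N_pos: "1 \<le> N"
    and kappa_pos: "0 < \<kappa>" and kappa_le_1: "\<kappa> \<le> 1" and gamma_nz: "\<gamma> \<noteq> 0"
    and C_pos: "0 < C" and C_ge: "(1 + 2 * (1 - \<kappa>) / \<kappa>) * G \<le> C"
    and smooth: "\<And>i x y. i < N \<Longrightarrow> norm (gf i x - gf i y) \<le> L * norm (x - y)"
    and variance: "\<And>x. (\<Sum>i<N. (norm (gf i x - GF x))\<^sup>2) / real N \<le> \<sigma>\<^sup>2"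
    and bounded: "\<And>i x. i < N \<Longrightarrow> norm (gf i x) \<le> G"
    and GF_eq: "\<And>x. GF x = sample_mean N (\<lambda>i. gf i x)"
begin

lemma L_nonneg: "0 \<le> L"
proof -
  have "norm (gf 0 1 - gf 0 0) \<le> L * norm (1 - 0 :: real ^ 'd)"
    using smooth[of 0 1 0] N_pos by simp
  then have "0 \<le> L * norm (1 :: real ^ 'd)"
    by (metis norm_ge_zero order_trans diff_zero)
  then show ?thesis
    by (simp add: zero_le_mult_iff)
qed

lemma mean_bias_le:
  fixes xp gt :: "real ^ 'd" and \<eta> :: real
  defines "x \<equiv> xp - \<eta> *\<^sub>R gt"
  defines "u \<equiv> disk_clipped_grad gf \<gamma> \<kappa> C x (- \<eta> *\<^sub>R gt)"
  shows "norm (GF x - (1 - \<kappa>) *\<^sub>R gt - \<kappa> *\<^sub>R sample_mean N u)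
    \<le> (1 - \<kappa>) * norm (GF xp - gt)
      + (1 - \<kappa>) * clip_bias_factor \<kappa> \<gamma> * \<bar>1 + \<gamma>\<bar> * (L * \<bar>\<eta>\<bar> * norm gt)"
proof -
  define s where "s = L * \<bar>\<eta>\<bar> * norm gt"
  define y where "y = x + \<gamma> *\<^sub>R (- \<eta> *\<^sub>R gt)"
  have dist: "norm (gf i a - gf i b) \<le> \<bar>c\<bar> * s" if "i < N" "a - b = (c * \<eta>) *\<^sub>R gt" for i a b c
  proof -
    have "norm (a - b) = \<bar>c\<bar> * (\<bar>\<eta>\<bar> * norm gt)"
      using that(2) by (simp add: abs_mult)
    then show ?thesis
      using smooth[OF that(1), of a b] by (simp add: s_def mult_ac)
  qed
  have sample: "norm (gf i x - (1 - \<kappa>) *\<^sub>R gf i xp - \<kappa> *\<^sub>R u i)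
      \<le> (1 - \<kappa>) * clip_bias_factor \<kappa> \<gamma> * \<bar>1 + \<gamma>\<bar> * s"
    if i: "i < N" for i
  proof -
    have "disk_sample \<kappa> \<gamma> C G s (gf i x) (gf i xp) (gf i y)"
      using kappa_pos kappa_le_1 gamma_nz C_pos C_ge bounded[OF i]
        dist[OF i, of x xp "-1"] dist[OF i, of y x "-\<gamma>"] dist[OF i, of xp y "1 + \<gamma>"]
      by unfold_locales (auto simp: x_def y_def algebra_simps)
    then show ?thesis
      using disk_sample.bias_le
      by (fastforce simp: disk_sample.mix_def disk_sample.coef_def u_def disk_clipped_grad_def y_def)
  qed
  have "sample_mean N (\<lambda>i. gf i x - (1 - \<kappa>) *\<^sub>R gf i xp - \<kappa> *\<^sub>R u i)
      = GF x - (1 - \<kappa>) *\<^sub>R GF xp - \<kappa> *\<^sub>R sample_mean N u"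
    by (simp only: sample_mean_diff sample_mean_scaleR GF_eq)
  then have "GF x - (1 - \<kappa>) *\<^sub>R gt - \<kappa> *\<^sub>R sample_mean N u
      = (1 - \<kappa>) *\<^sub>R (GF xp - gt) + sample_mean N (\<lambda>i. gf i x - (1 - \<kappa>) *\<^sub>R gf i xp - \<kappa> *\<^sub>R u i)"
    by (simp add: algebra_simps)
  then have "norm (GF x - (1 - \<kappa>) *\<^sub>R gt - \<kappa> *\<^sub>R sample_mean N u)
      \<le> norm ((1 - \<kappa>) *\<^sub>R (GF xp - gt))
        + norm (sample_mean N (\<lambda>i. gf i x - (1 - \<kappa>) *\<^sub>R gf i xp - \<kappa> *\<^sub>R u i))"
    by (simp only: norm_triangle_ineq)
  also have "\<dots> \<le> (1 - \<kappa>) * norm (GF xp - gt) + (1 - \<kappa>) * clip_bias_factor \<kappa> \<gamma> * \<bar>1 + \<gamma>\<bar> * s"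
    using norm_sample_mean_le[OF N_pos sample] kappa_le_1 by simp
  finally show ?thesis
    by (simp add: s_def)
qed

lemma clipped_grad_dev_sq_le:
  fixes xp gt :: "real ^ 'd" and \<eta> :: real
  defines "x \<equiv> xp - \<eta> *\<^sub>R gt"
  assumes i: "i < N"
  shows "(norm (disk_clipped_grad gf \<gamma> \<kappa> C x (- \<eta> *\<^sub>R gt) i - clip (GF x) C))\<^sup>2
    \<le> 2 * (norm (gf i x - GF x))\<^sup>2 + 2 * ((1 - \<kappa>) / \<kappa> * (L * \<bar>\<eta>\<bar> * norm gt))\<^sup>2"
proof -
  define a where "a = (1 - \<kappa>) / (\<kappa> * \<gamma>)"
  define y where "y = x + \<gamma> *\<^sub>R (- \<eta> *\<^sub>R gt)"
  define dev where "dev = a *\<^sub>R (gf i y - gf i x)"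
  have "norm (disk_clipped_grad gf \<gamma> \<kappa> C x (- \<eta> *\<^sub>R gt) i - clip (GF x) C)
      \<le> norm (a *\<^sub>R gf i y + (1 - a) *\<^sub>R gf i x - GF x)"
    unfolding disk_clipped_grad_def a_def[symmetric] y_def[symmetric]
    using C_pos by (intro norm_clip_diff_le) simp
  also have "a *\<^sub>R gf i y + (1 - a) *\<^sub>R gf i x - GF x = (gf i x - GF x) + dev"
    by (simp add: dev_def algebra_simps)
  finally have "(norm (disk_clipped_grad gf \<gamma> \<kappa> C x (- \<eta> *\<^sub>R gt) i - clip (GF x) C))\<^sup>2
      \<le> (norm ((gf i x - GF x) + dev))\<^sup>2"
    by (rule power_mono) simp
  also have "\<dots> \<le> 2 * (norm (gf i x - GF x))\<^sup>2 + 2 * (norm dev)\<^sup>2"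
    by (rule power2_norm_add_le)
  finally have "(norm (disk_clipped_grad gf \<gamma> \<kappa> C x (- \<eta> *\<^sub>R gt) i - clip (GF x) C))\<^sup>2
      \<le> 2 * (norm (gf i x - GF x))\<^sup>2 + 2 * (norm dev)\<^sup>2" .
  moreover have "norm dev \<le> (1 - \<kappa>) / \<kappa> * (L * \<bar>\<eta>\<bar> * norm gt)"
  proof -
    have "norm dev \<le> \<bar>a\<bar> * (L * norm (y - x))"
      using smooth[OF i, of y x] by (simp add: dev_def mult_left_mono)
    also have "\<dots> = (\<bar>a\<bar> * \<bar>\<gamma>\<bar>) * (L * \<bar>\<eta>\<bar> * norm gt)"
      by (simp add: y_def abs_mult mult_ac)
    also have "\<bar>a\<bar> * \<bar>\<gamma>\<bar> = (1 - \<kappa>) / \<kappa>"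
      using kappa_pos kappa_le_1 gamma_nz by (simp add: a_def abs_divide abs_mult)
    finally show ?thesis .
  qed
  then have "(norm dev)\<^sup>2 \<le> ((1 - \<kappa>) / \<kappa> * (L * \<bar>\<eta>\<bar> * norm gt))\<^sup>2"
    by (intro power_mono) simp_all
  ultimately show ?thesis
    by linarith
qed

lemma clipped_variance_le:
  fixes xp gt :: "real ^ 'd" and \<eta> :: real
  defines "x \<equiv> xp - \<eta> *\<^sub>R gt"
  defines "u \<equiv> disk_clipped_grad gf \<gamma> \<kappa> C x (- \<eta> *\<^sub>R gt)"
  shows "(\<Sum>i<N. (norm (u i - sample_mean N u))\<^sup>2) / real N
    \<le> 2 * \<sigma>\<^sup>2 + 2 * ((1 - \<kappa>) / \<kappa>)\<^sup>2 * (L * \<bar>\<eta>\<bar> * norm gt)\<^sup>2"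
proof -
  define c where "c = (1 - \<kappa>) / \<kappa> * (L * \<bar>\<eta>\<bar> * norm gt)"
  have "(\<Sum>i<N. (norm (u i - sample_mean N u))\<^sup>2) \<le> (\<Sum>i<N. (norm (u i - clip (GF x) C))\<^sup>2)"
    using N_pos by (rule sum_norm_sq_diff_sample_mean_le)
  also have "\<dots> \<le> (\<Sum>i<N. 2 * (norm (gf i x - GF x))\<^sup>2 + 2 * c\<^sup>2)"
    unfolding u_def x_def c_def by (intro sum_mono clipped_grad_dev_sq_le) simp
  also have "\<dots> = 2 * (\<Sum>i<N. (norm (gf i x - GF x))\<^sup>2) + real N * (2 * c\<^sup>2)"
    by (simp add: sum.distrib sum_distrib_left)
  also have "\<dots> \<le> real N * (2 * \<sigma>\<^sup>2 + 2 * c\<^sup>2)"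
    using variance[of x] N_pos by (simp add: divide_le_eq algebra_simps)
  also have "c\<^sup>2 = ((1 - \<kappa>) / \<kappa>)\<^sup>2 * (L * \<bar>\<eta>\<bar> * norm gt)\<^sup>2"
    unfolding c_def by (rule power_mult_distrib)
  finally show ?thesis
    using N_pos by (simp add: divide_le_eq algebra_simps)
qed

lemma tracking_error_le:
  fixes xp gt :: "real ^ 'd" and \<eta> \<sigma>DP :: real
  assumes B: "1 \<le> B"
  shows "(\<integral>\<^sup>+bs. \<integral>\<^sup>+w. ennreal ((norm (GF (xp - \<eta> *\<^sub>R gt)
        - fst (snd (disk_step gf \<eta> \<gamma> \<kappa> C B (xp - \<eta> *\<^sub>R gt, gt, - \<eta> *\<^sub>R gt) bs w))))\<^sup>2)
      \<partial>gauss_noise \<sigma>DP \<partial>batch_pmf N B)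
    \<le> ennreal ((1 - \<kappa>)\<^sup>2 * (1 + 4 * \<eta>\<^sup>2 * L\<^sup>2 + \<bar>1 + \<gamma>\<bar> * (\<kappa> + 2 * \<eta>\<^sup>2 * L\<^sup>2 * disk_M \<kappa> \<gamma>))
          * (norm (GF xp - gt))\<^sup>2
        + 2 * \<eta>\<^sup>2 * L\<^sup>2 * (1 - \<kappa>)\<^sup>2 * (2 + \<bar>1 + \<gamma>\<bar> * disk_M \<kappa> \<gamma>) * (norm (GF xp))\<^sup>2
        + \<kappa>\<^sup>2 * ((2 + \<bar>1 + \<gamma>\<bar>) * \<sigma>\<^sup>2 / real B + real CARD('d) * \<sigma>DP\<^sup>2))"
    (is "_ \<le> ennreal ?R")
proof -
  define x where "x = xp - \<eta> *\<^sub>R gt"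
  define u where "u = disk_clipped_grad gf \<gamma> \<kappa> C x (- \<eta> *\<^sub>R gt)"
  define b where "b = norm (GF x - (1 - \<kappa>) *\<^sub>R gt - \<kappa> *\<^sub>R sample_mean N u)"
  define V where "V = (\<Sum>i<N. (norm (u i - sample_mean N u))\<^sup>2) / real N"
  have alg: "b\<^sup>2 + \<kappa>\<^sup>2 * V / real B
    \<le> (1 - \<kappa>)\<^sup>2 * (1 + 4 * (L * \<bar>\<eta>\<bar>)\<^sup>2 + \<bar>1 + \<gamma>\<bar> * (\<kappa> + 2 * (L * \<bar>\<eta>\<bar>)\<^sup>2 * disk_M \<kappa> \<gamma>))
        * (norm (GF xp - gt))\<^sup>2
      + 2 * (L * \<bar>\<eta>\<bar>)\<^sup>2 * (1 - \<kappa>)\<^sup>2 * (2 + \<bar>1 + \<gamma>\<bar> * disk_M \<kappa> \<gamma>) * (norm (GF xp))\<^sup>2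
      + \<kappa>\<^sup>2 * (2 + \<bar>1 + \<gamma>\<bar>) * \<sigma>\<^sup>2 / real B"
  proof (rule tracking_error_algebra)
    show "b \<le> (1 - \<kappa>) * norm (GF xp - gt)
        + (1 - \<kappa>) * clip_bias_factor \<kappa> \<gamma> * \<bar>1 + \<gamma>\<bar> * (L * \<bar>\<eta>\<bar> * norm gt)"
      using mean_bias_le[of xp \<eta> gt] by (simp add: b_def x_def u_def mult.assoc)
    show "V \<le> 2 * \<sigma>\<^sup>2 + 2 * ((1 - \<kappa>) / \<kappa>)\<^sup>2 * (L * \<bar>\<eta>\<bar> * norm gt)\<^sup>2"
      using clipped_variance_le[of xp \<eta> gt] by (simp add: V_def x_def u_def mult.assoc)
    show "norm gt \<le> norm (GF xp - gt) + norm (GF xp)"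
      using norm_triangle_ineq4[of "GF xp" "GF xp - gt"] by simp
    show "(clip_bias_factor \<kappa> \<gamma>)\<^sup>2 * (1 / \<kappa> + \<bar>1 + \<gamma>\<bar>) \<le> disk_M \<kappa> \<gamma>"
      using kappa_pos kappa_le_1 gamma_nz by (rule clip_bias_factor_sq_le)
    show "0 \<le> clip_bias_factor \<kappa> \<gamma>"
      using kappa_pos by (simp add: clip_bias_factor_def)
  qed (use kappa_pos kappa_le_1 B L_nonneg in \<open>auto simp: b_def\<close>)
  have "(\<integral>\<^sup>+bs. \<integral>\<^sup>+w. ennreal ((norm (GF x - fst (snd (disk_step gf \<eta> \<gamma> \<kappa> C B (x, gt, - \<eta> *\<^sub>R gt) bs w))))\<^sup>2)
      \<partial>gauss_noise \<sigma>DP \<partial>batch_pmf N B)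
    = ennreal (b\<^sup>2 + \<kappa>\<^sup>2 / (real B * real N) * (\<Sum>i<N. (norm (u i - sample_mean N u))\<^sup>2)
        + \<kappa>\<^sup>2 * real CARD('d) * \<sigma>DP\<^sup>2)"
    unfolding b_def u_def by (rule nn_integral_disk_step_error[OF N_pos B])
  also have "\<dots> \<le> ennreal ?R"
  proof -
    have "\<kappa>\<^sup>2 / (real B * real N) * (\<Sum>i<N. (norm (u i - sample_mean N u))\<^sup>2) = \<kappa>\<^sup>2 * V / real B"
      by (simp add: V_def)
    moreover have "(L * \<bar>\<eta>\<bar>)\<^sup>2 = \<eta>\<^sup>2 * L\<^sup>2"
      by (simp add: power_mult_distrib)
    ultimately show ?thesis
      using alg by (intro ennreal_leI) (simp add: algebra_simps add_divide_distrib)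
  qed
  finally show ?thesis
    by (simp add: x_def)
qed

end

theorem lemma1:
  fixes f :: "nat \<Rightarrow> real ^ 'd \<Rightarrow> real"
    and gf :: "nat \<Rightarrow> real ^ 'd \<Rightarrow> real ^ 'd"
    and F :: "real ^ 'd \<Rightarrow> real"
    and GF :: "real ^ 'd \<Rightarrow> real ^ 'd"
    and N B :: nat
    and x0 :: "real ^ 'd"
    and \<eta> \<gamma> \<kappa> C \<sigma>DP \<sigma>SGD L G :: real
    and bs :: "nat \<Rightarrow> nat list" and ws :: "nat \<Rightarrow> real ^ 'd"
    and t :: nat
  assumes N: "N \<ge> 1" and Bpos: "B \<ge> 1"
    and eta: "\<eta> > 0" and gam: "\<gamma> \<noteq> 0" and kap: "0 < \<kappa>" "\<kappa> \<le> 1"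
    and Cpos: "C > 0" and sig: "\<sigma>DP \<ge> 0"
    and grad_f: "\<And>i x. i < N \<Longrightarrow> (f i has_derivative (\<lambda>h. gf i x \<bullet> h)) (at x)"
    and F_def: "\<And>x. F x = (\<Sum>i<N. f i x) / real N"
    and grad_F: "\<And>x. (F has_derivative (\<lambda>h. GF x \<bullet> h)) (at x)"
    and A1: "\<And>i x y. i < N \<Longrightarrow> norm (gf i x - gf i y) \<le> L * norm (x - y)"
    and A2: "\<And>x. (\<Sum>i<N. (norm (gf i x - GF x))\<^sup>2) / real N \<le> \<sigma>SGD\<^sup>2"
    and A3: "\<And>i x. i < N \<Longrightarrow> norm (gf i x) \<le> G"
    and Cbig: "C \<ge> (1 + 2 * (1 - \<kappa>) / \<kappa>) * G"
    and t1: "t \<ge> 1"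
  shows
   "(let S = disk_state gf x0 \<eta> \<gamma> \<kappa> C B bs ws;
         xt = fst (S t);
         xprev = fst (S (t - 1));
         Delta_prev = GF xprev - fst (snd (S t));
         M = 1 + 4 * (2 + 1 / \<kappa> + \<bar>1 + \<gamma>\<bar>) / \<gamma>\<^sup>2
     in (\<integral>\<^sup>+ bt. \<integral>\<^sup>+ w. ennreal ((norm (GF xt - fst (snd (disk_step gf \<eta> \<gamma> \<kappa> C B (S t) bt w))))\<^sup>2)
            \<partial>(gauss_noise \<sigma>DP) \<partial>(measure_pmf (batch_pmf N B)))
        \<le> ennreal ((1 - \<kappa>)\<^sup>2 * (1 + 4 * \<eta>\<^sup>2 * L\<^sup>2 + \<bar>1 + \<gamma>\<bar> * (\<kappa> + 2 * \<eta>\<^sup>2 * L\<^sup>2 * M))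
                     * (norm Delta_prev)\<^sup>2
                   + 2 * \<eta>\<^sup>2 * L\<^sup>2 * (1 - \<kappa>)\<^sup>2 * (2 + \<bar>1 + \<gamma>\<bar> * M) * (norm (GF xprev))\<^sup>2
                   + \<kappa>\<^sup>2 * ((2 + \<bar>1 + \<gamma>\<bar>) * \<sigma>SGD\<^sup>2 / real B + real CARD('d) * \<sigma>DP\<^sup>2)))"
proof -
  interpret disk_setting N gf GF L G \<sigma>SGD \<kappa> \<gamma> C
  proof
    show "GF x = sample_mean N (\<lambda>i. gf i x)" for x
      by (rule gradient_eq_sample_mean[where f = f and F = F]) (simp_all add: grad_f F_def grad_F)
  qed (use N kap gam Cpos Cbig A1 A2 A3 in auto)
  define S where "S = disk_state gf x0 \<eta> \<gamma> \<kappa> C B bs ws"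
  define xp where "xp = fst (S (t - 1))"
  define gt where "gt = fst (snd (S t))"
  obtain k where k: "t = Suc k"
    using t1 by (cases t) auto
  have "S t = disk_step gf \<eta> \<gamma> \<kappa> C B (S (t - 1)) (bs (t - 1)) (ws (t - 1))"
    unfolding S_def k by simp
  then have "S t = (xp - \<eta> *\<^sub>R gt, gt, - \<eta> *\<^sub>R gt)"
    by (simp add: prod_eq_iff disk_step_def Let_def xp_def gt_def)
  then show ?thesis
    using tracking_error_le[OF Bpos, where xp = xp and gt = gt and \<eta> = \<eta> and \<sigma>DP = \<sigma>DP]
    unfolding Let_def S_def[symmetric] xp_def[symmetric] by (simp add: disk_M_def)
qed

end
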